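(* Let $R$ be a commutative ring with $1$, let $M$ be an le-module over $R$, and suppose the natural map $\psi:\mathrm{Spec}(M)\to\mathrm{Spec}(R/Ann(M))$ is surjective. Then the following are equivalent: (i) $\mathrm{Spec}(M)$ is a spectral space; (ii) $\mathrm{Spec}(M)$ is a $T_0$-space; (iii) for all $p,q\in\mathrm{Spec}(M)$, $V^*(p)=V^*(q)$ implies $p=q$; (iv) $|\mathrm{Spec}_P(M)|\leq 1$ for every $P\in\mathrm{Spec}(R)$; (v) $\psi$ is injective; (vi) $\mathrm{Spec}(M)$ is homeomorphic to $\mathrm{Spec}(R/Ann(M))$.
   Context: An le-module over $R$ is a complete lattice $(M,\leq)$ with greatest element $e$, with a commutative monoid operation $+$ (identity $0_M$) satisfying $m+\bigvee_{i}m_i=\bigvee_i(m+m_i)$ for all families, and a map $R\times M\to M$, $(r,m)\mapsto rm$, such that for all $r,r_1,r_2\in R$, $m,m_1,m_2,m_i\in M$: $r(m_1+m_2)=rm_1+rm_2$; $(r_1+r_2)m\leq r_1m+r_2m$; $(r_1r_2)m=r_1(r_2m)$; $1_Rm=m$; $0_Rm=r0_M=0_M$; $r(\bigvee_i m_i)=\bigvee_i rm_i$. A submodule element is $n\in M$ with $n+n\leq n$ and $rn\leq n$ for all $r\in R$; it is proper if $n\neq e$. For $n\in M$ put $(n:e)=\{r\in R: re\leq n\}$, and $Ann(M)=(0_M:e)$. A prime submodule element is a proper submodule element $p$ such that for all $r\in R$, $n\in M$, $rn\leq p$ implies $r\in(p:e)$ or $n\leq p$; $\mathrm{Spec}(M)$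 denotes the set of prime submodule elements, and for $P\in\mathrm{Spec}(R)$, $\mathrm{Spec}_P(M)=\{p\in\mathrm{Spec}(M):(p:e)=P\}$. For a submodule element $n$, $V^*(n)=\{p\in\mathrm{Spec}(M):(n:e)\subseteq(p:e)\}$; the Zariski topology on $\mathrm{Spec}(M)$ has as closed sets exactly the sets $V^*(n)$, $n$ a submodule element. The natural map is $\psi(p)=(p:e)/Ann(M)$. A topological space is spectral if it is $T_0$, quasi-compact, its quasi-compact open subsets are closed under finite intersection and form an open base, and every irreducible closed subset has a generic point. *)

theory Defs
  imports "HOL-Analysis.Analysis" "HOL-Algebra.Algebra"
begin

text \<open>An le-module over the commutative ring R: the complete lattice is the type 'm
  (greatest element e = Orderings.top), pl is the monoid operation +, z is 0_M, sm is the
  scalar action.\<close>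

definition le_module ::
  "('r,'b) ring_scheme \<Rightarrow> ('m::complete_lattice \<Rightarrow> 'm \<Rightarrow> 'm) \<Rightarrow> 'm \<Rightarrow> ('r \<Rightarrow> 'm \<Rightarrow> 'm) \<Rightarrow> bool"
where
  "le_module R pl z sm \<longleftrightarrow>
     cring R \<and>
     (\<forall>a b c. pl (pl a b) c = pl a (pl b c)) \<and>
     (\<forall>a b. pl a b = pl b a) \<and>
     (\<forall>a. pl z a = a) \<and>
     (\<forall>m A. A \<noteq> {} \<longrightarrow> pl m (Complete_Lattices.Sup A) = Sup (pl m ` A)) \<and>
     (\<forall>r\<in>carrier R. \<forall>m1 m2. sm r (pl m1 m2) = pl (sm r m1) (sm r m2)) \<and>
     (\<forall>r1\<in>carrier R. \<forall>r2\<in>carrier R. \<forall>m. sm (r1 \<oplus>\<^bsub>R\<^esub> r2) m \<le> pl (sm r1 m) (sm r2 m)) \<and>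
     (\<forall>r1\<in>carrier R. \<forall>r2\<in>carrier R. \<forall>m. sm (r1 \<otimes>\<^bsub>R\<^esub> r2) m = sm r1 (sm r2 m)) \<and>
     (\<forall>m. sm \<one>\<^bsub>R\<^esub> m = m) \<and>
     (\<forall>m. sm \<zero>\<^bsub>R\<^esub> m = z) \<and>
     (\<forall>r\<in>carrier R. sm r z = z) \<and>
     (\<forall>r\<in>carrier R. \<forall>A. sm r (Complete_Lattices.Sup A) = Sup (sm r ` A))"

definition submodule_elem ::
  "('r,'b) ring_scheme \<Rightarrow> ('m::complete_lattice \<Rightarrow> 'm \<Rightarrow> 'm) \<Rightarrow> ('r \<Rightarrow> 'm \<Rightarrow> 'm) \<Rightarrow> 'm \<Rightarrow> bool"
where
  "submodule_elem R pl sm n \<longleftrightarrow> pl n n \<le> n \<and> (\<forall>r\<in>carrier R. sm r n \<le> n)"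

definition colon :: "('r,'b) ring_scheme \<Rightarrow> ('r \<Rightarrow> 'm::complete_lattice \<Rightarrow> 'm) \<Rightarrow> 'm \<Rightarrow> 'r set"
where "colon R sm n = {r \<in> carrier R. sm r Orderings.top \<le> n}"

definition Ann :: "('r,'b) ring_scheme \<Rightarrow> 'm::complete_lattice \<Rightarrow> ('r \<Rightarrow> 'm \<Rightarrow> 'm) \<Rightarrow> 'r set"
where "Ann R z sm = colon R sm z"

definition prime_submodule_elem ::
  "('r,'b) ring_scheme \<Rightarrow> ('m::complete_lattice \<Rightarrow> 'm \<Rightarrow> 'm) \<Rightarrow> ('r \<Rightarrow> 'm \<Rightarrow> 'm) \<Rightarrow> 'm \<Rightarrow> bool"
where
  "prime_submodule_elem R pl sm p \<longleftrightarrow>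
     submodule_elem R pl sm p \<and> p \<noteq> Orderings.top \<and>
     (\<forall>r\<in>carrier R. \<forall>n. sm r n \<le> p \<longrightarrow> r \<in> colon R sm p \<or> n \<le> p)"

definition SpecM ::
  "('r,'b) ring_scheme \<Rightarrow> ('m::complete_lattice \<Rightarrow> 'm \<Rightarrow> 'm) \<Rightarrow> ('r \<Rightarrow> 'm \<Rightarrow> 'm) \<Rightarrow> 'm set"
where "SpecM R pl sm = {p. prime_submodule_elem R pl sm p}"

definition SpecP ::
  "('r,'b) ring_scheme \<Rightarrow> ('m::complete_lattice \<Rightarrow> 'm \<Rightarrow> 'm) \<Rightarrow> ('r \<Rightarrow> 'm \<Rightarrow> 'm) \<Rightarrow> 'r set \<Rightarrow> 'm set"
where "SpecP R pl sm P = {p \<in> SpecM R pl sm. colon R sm p = P}"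

definition SpecR :: "('a,'c) ring_scheme \<Rightarrow> 'a set set"
where "SpecR A = {P. primeideal P A}"

definition Vstar ::
  "('r,'b) ring_scheme \<Rightarrow> ('m::complete_lattice \<Rightarrow> 'm \<Rightarrow> 'm) \<Rightarrow> ('r \<Rightarrow> 'm \<Rightarrow> 'm) \<Rightarrow> 'm \<Rightarrow> 'm set"
where "Vstar R pl sm n = {p \<in> SpecM R pl sm. colon R sm n \<subseteq> colon R sm p}"

definition zariskiM ::
  "('r,'b) ring_scheme \<Rightarrow> ('m::complete_lattice \<Rightarrow> 'm \<Rightarrow> 'm) \<Rightarrow> ('r \<Rightarrow> 'm \<Rightarrow> 'm) \<Rightarrow> 'm topology"
where
  "zariskiM R pl sm = topology (\<lambda>U. U \<subseteq> SpecM R pl sm \<and>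
      (\<exists>n. submodule_elem R pl sm n \<and> SpecM R pl sm - U = Vstar R pl sm n))"

definition zariskiR :: "('a,'c) ring_scheme \<Rightarrow> 'a set topology"
where
  "zariskiR A = topology (\<lambda>U. U \<subseteq> SpecR A \<and>
      (\<exists>S. S \<subseteq> carrier A \<and> SpecR A - U = {P \<in> SpecR A. S \<subseteq> P}))"

text \<open>Natural map psi(p) = (p:e)/Ann(M), an ideal of R/Ann(M) (set of cosets).\<close>
definition psi ::
  "('r,'b) ring_scheme \<Rightarrow> 'm::complete_lattice \<Rightarrow> ('r \<Rightarrow> 'm \<Rightarrow> 'm) \<Rightarrow> 'm \<Rightarrow> 'r set set"
where "psi R z sm p = (\<lambda>r. Ann R z sm +>\<^bsub>R\<^esub> r) ` colon R sm p"

definition irreducible_in :: "'a topology \<Rightarrow> 'a set \<Rightarrow> bool"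
where "irreducible_in T Z \<longleftrightarrow> Z \<noteq> {} \<and> Z \<subseteq> topspace T \<and>
   (\<forall>A B. closedin T A \<and> closedin T B \<and> Z \<subseteq> A \<union> B \<longrightarrow> Z \<subseteq> A \<or> Z \<subseteq> B)"

definition spectral_space :: "'a topology \<Rightarrow> bool"
where "spectral_space T \<longleftrightarrow>
   t0_space T \<and> compact_space T \<and>
   (\<forall>U V. openin T U \<and> compactin T U \<and> openin T V \<and> compactin T V
          \<longrightarrow> compactin T (U \<inter> V)) \<and>
   (\<forall>U. openin T U \<longrightarrow> (\<exists>\<F>. (\<forall>W\<in>\<F>. openin T W \<and> compactin T W) \<and> \<Union>\<F> = U)) \<and>
   (\<forall>Z. closedin T Z \<and> irreducible_in T Z \<longrightarrow> (\<exists>x\<in>Z. T closure_of {x} = Z))"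

end

theory Submission
  imports Defs
begin

text \<open>Both \<open>Spec(M)\<close> and \<open>Spec(R/Ann(M))\<close> carry the Zariski topology of \<open>Spec(R)\<close> pulled
  back along a map into the prime ideals of \<open>R\<close>: \<open>p \<mapsto> (p : e)\<close>, resp. \<open>P/Ann(M) \<mapsto> P\<close>.
  Surjectivity of \<open>\<psi>\<close> says that \<open>(p : e)\<close> ranges over all primes containing \<open>Ann(M)\<close>.
  For any map \<open>c\<close> onto the primes above an ideal \<open>I\<close>, the pulled-back space satisfies every
  axiom of a spectral space except possibly \<open>T\<^sub>0\<close>: the sets \<open>D(f)\<close> form a basis of quasi-compact
  opens closed under intersection (quasi-compactness comes from Krull's lemma: if \<open>V(S) \<subseteq> V(f)\<close>
  then a power of \<open>f\<close> lies in the ideal generated by \<open>S \<union> I\<close>, hence in one generated by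
  finitely many elements), and an irreducible closed set has the generic point lying over the
  intersection of its primes.  The space is \<open>T\<^sub>0\<close> iff \<open>c\<close> is injective, and then
  \<open>x \<mapsto> c x / I\<close> is a homeomorphism onto \<open>Spec(R/I)\<close>.  So all six conditions are
  equivalent to injectivity of \<open>p \<mapsto> (p : e)\<close> on \<open>Spec(M)\<close>.\<close>

section \<open>Ideals avoiding the powers of an element, and primes of quotient rings\<close>

lemma (in ring) ideal_directed_Union:
  assumes "C \<noteq> {}" and ideals: "\<And>I. I \<in> C \<Longrightarrow> ideal I R"
    and directed: "\<And>I J. I \<in> C \<Longrightarrow> J \<in> C \<Longrightarrow> \<exists>K\<in>C. I \<subseteq> K \<and> J \<subseteq> K"
  shows "ideal (\<Union>C) R"
proof (rule idealI[OF ring_axioms])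
  have subgroups: "additive_subgroup I R" if "I \<in> C" for I
    using ideals[OF that] by (rule ideal.axioms(1))
  show "subgroup (\<Union>C) (add_monoid R)"
  proof (rule add.subgroupI)
    show "\<Union>C \<subseteq> carrier R"
      using ideals ideal.Icarr by fast
    obtain I where "I \<in> C"
      using assms(1) by blast
    then show "\<Union>C \<noteq> {}"
      using additive_subgroup.zero_closed[OF subgroups] by blast
  next
    fix a assume "a \<in> \<Union>C"
    then show "\<ominus> a \<in> \<Union>C"
      using additive_subgroup.a_inv_closed[OF subgroups] by blast
  next
    fix a b assume "a \<in> \<Union>C" "b \<in> \<Union>C"
    then obtain I J where "I \<in> C" "J \<in> C" "a \<in> I" "b \<in> J"
      by blast
    then obtain K where "K \<in> C" "a \<in> K" "b \<in> K"
      using directed by blast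
    then show "a \<oplus> b \<in> \<Union>C"
      using additive_subgroup.a_closed[OF subgroups] by blast
  qed
next
  fix a x assume "a \<in> \<Union>C" "x \<in> carrier R"
  then show "x \<otimes> a \<in> \<Union>C" "a \<otimes> x \<in> \<Union>C"
    using ideal.I_l_closed[OF ideals] ideal.I_r_closed[OF ideals] by blast+
qed

lemma (in ring) genideal_finite_subset:
  assumes A: "A \<subseteq> carrier R" and x: "x \<in> Idl A"
  obtains F where "finite F" "F \<subseteq> A" "x \<in> Idl F"
proof -
  let ?C = "{Idl F | F. finite F \<and> F \<subseteq> A}"
  have mono: "Idl F \<subseteq> Idl G" if "F \<subseteq> G" "G \<subseteq> carrier R" for F G
    using that genideal_minimal[OF genideal_ideal] genideal_self by (metis order_trans)
  have "ideal (\<Union>?C) R"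
  proof (rule ideal_directed_Union)
    show "?C \<noteq> {}" by blast
    show "\<And>I. I \<in> ?C \<Longrightarrow> ideal I R"
      using A genideal_ideal by auto
    fix I J assume "I \<in> ?C" "J \<in> ?C"
    then obtain F G where "finite F" "F \<subseteq> A" "I = Idl F" "finite G" "G \<subseteq> A" "J = Idl G"
      by blast
    then show "\<exists>K\<in>?C. I \<subseteq> K \<and> J \<subseteq> K"
      using mono[of F "F \<union> G"] mono[of G "F \<union> G"] A by blast
  qed
  moreover have "A \<subseteq> \<Union>?C"
    using A genideal_self' by blast
  ultimately have "x \<in> \<Union>?C"
    using genideal_minimal x by blast
  then show ?thesis
    using that by blast
qed

lemma (in primeideal) nat_pow_mem_imp_mem:
  assumes "a \<in> carrier R" and "a [^] (n::nat) \<in> I"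
  shows "a \<in> I"
  using assms(2)
proof (induction n)
  case 0
  then show ?case
    using I_notcarr one_imp_carrier by simp
next
  case (Suc n)
  then show ?case
    using I_prime[of "a [^] n" a] assms(1) by auto
qed

lemma (in cring) maximal_ideal_avoiding_powers:
  assumes J: "ideal J R" and avoid: "\<And>n::nat. f [^] n \<notin> J"
  obtains M where "ideal M R" "J \<subseteq> M" "\<And>n::nat. f [^] n \<notin> M"
    and "\<And>K. ideal K R \<Longrightarrow> M \<subseteq> K \<Longrightarrow> (\<And>n::nat. f [^] n \<notin> K) \<Longrightarrow> K = M"
proof -
  define A where "A = {K. ideal K R \<and> J \<subseteq> K \<and> (\<forall>n::nat. f [^] n \<notin> K)}"
  have "\<exists>U\<in>A. \<forall>K\<in>C. K \<subseteq> U" if C: "C \<in> chains A" for C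
  proof (cases "C = {}")
    case True
    have "J \<in> A"
      using J avoid by (simp add: A_def)
    with True show ?thesis
      by (metis empty_iff)
  next
    case False
    have CA: "K \<in> A" if "K \<in> C" for K
      using chainsD2[OF C] that by (rule subsetD)
    have "ideal (\<Union>C) R"
    proof (rule ideal_directed_Union[OF False])
      show "ideal I R" if "I \<in> C" for I
        using CA[OF that] by (simp add: A_def)
      show "\<exists>L\<in>C. I \<subseteq> L \<and> K \<subseteq> L" if "I \<in> C" "K \<in> C" for I K
        using chainsD[OF C that] that by (metis order_refl)
    qed
    moreover have "J \<subseteq> \<Union>C" "\<forall>n::nat. f [^] n \<notin> \<Union>C"
      using CA False by (fastforce simp: A_def)+
    ultimately have "\<Union>C \<in> A"
      by (simp add: A_def)
    then show ?thesis
      by (metis Union_upper)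
  qed
  then obtain M where M: "M \<in> A" and maximal: "\<And>K. K \<in> A \<Longrightarrow> M \<subseteq> K \<Longrightarrow> K = M"
    using Zorn_Lemma2[of A] by metis
  show ?thesis
  proof (rule that)
    show "ideal M R" "J \<subseteq> M" "\<And>n::nat. f [^] n \<notin> M"
      using M by (simp_all add: A_def)
    fix K assume "ideal K R" "M \<subseteq> K" "\<And>n::nat. f [^] n \<notin> K"
    moreover have "J \<subseteq> K"
      using M \<open>M \<subseteq> K\<close> unfolding A_def by blast
    ultimately show "K = M"
      using maximal[of K] by (simp add: A_def)
  qed
qed

lemma (in cring) nat_pow_mem_add_PIdl_if_maximal:
  assumes M: "ideal M R"
    and maximal: "\<And>K. ideal K R \<Longrightarrow> M \<subseteq> K \<Longrightarrow> (\<And>n::nat. f [^] n \<notin> K) \<Longrightarrow> K = M"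
    and a: "a \<in> carrier R" "a \<notin> M"
  obtains n :: nat and p x where "p \<in> M" "x \<in> carrier R" "f [^] n = p \<oplus> x \<otimes> a"
proof -
  interpret M: ideal M R
    by (rule M)
  have M_sub: "M \<subseteq> M <+> PIdl a"
  proof
    fix m assume "m \<in> M"
    then have "m = m \<oplus> \<zero> \<otimes> a"
      using a(1) M.Icarr by simp
    then show "m \<in> M <+> PIdl a"
      unfolding set_add_def' cgenideal_def using \<open>m \<in> M\<close> by blast
  qed
  have "a = \<zero> \<oplus> \<one> \<otimes> a"
    using a(1) by simp
  then have "a \<in> M <+> PIdl a"
    unfolding set_add_def' cgenideal_def using M.zero_closed by blast
  then have "M <+> PIdl a \<noteq> M"
    using a(2) by metis
  then obtain n :: nat where "f [^] n \<in> M <+> PIdl a"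
    using maximal[OF add_ideals[OF M cgenideal_ideal[OF a(1)]] M_sub] by blast
  then show ?thesis
    using that unfolding set_add_def' cgenideal_def by auto
qed

text \<open>Zorn's lemma gives an ideal maximal among those containing \<open>J\<close> and avoiding all powers
  of \<open>f\<close>; such an ideal is prime.\<close>

lemma (in cring) primeideal_avoiding_powers:
  assumes J: "ideal J R" and f: "f \<in> carrier R" and avoid: "\<And>n::nat. f [^] n \<notin> J"
  obtains P where "primeideal P R" "J \<subseteq> P" "f \<notin> P"
proof -
  obtain M where M: "ideal M R" "J \<subseteq> M" and M_avoid: "\<And>n::nat. f [^] n \<notin> M"
    and maximal: "\<And>K. ideal K R \<Longrightarrow> M \<subseteq> K \<Longrightarrow> (\<And>n::nat. f [^] n \<notin> K) \<Longrightarrow> K = M"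
    using maximal_ideal_avoiding_powers[OF J avoid] by blast
  interpret M: ideal M R
    by (rule M(1))
  have "primeideal M R"
  proof (rule primeidealI[OF M(1) is_cring])
    show "carrier R \<noteq> M"
      using M_avoid[of 0] by auto
    fix a b assume a: "a \<in> carrier R" and b: "b \<in> carrier R" and ab: "a \<otimes> b \<in> M"
    show "a \<in> M \<or> b \<in> M"
    proof (rule ccontr)
      assume "\<not> (a \<in> M \<or> b \<in> M)"
      then have "a \<notin> M" "b \<notin> M"
        by simp_all
      obtain m :: nat and p x where p: "p \<in> M" "x \<in> carrier R" "f [^] m = p \<oplus> x \<otimes> a"
        by (rule nat_pow_mem_add_PIdl_if_maximal[OF M(1) maximal a \<open>a \<notin> M\<close>])
      obtain n :: nat and q y where q: "q \<in> M" "y \<in> carrier R" "f [^] n = q \<oplus> y \<otimes> b"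
        by (rule nat_pow_mem_add_PIdl_if_maximal[OF M(1) maximal b \<open>b \<notin> M\<close>])
      have "f [^] (m + n) = (p \<oplus> x \<otimes> a) \<otimes> (q \<oplus> y \<otimes> b)"
        using nat_pow_mult[OF f, of m n] p(3) q(3) by simp
      also have "\<dots> = p \<otimes> (q \<oplus> y \<otimes> b) \<oplus> (x \<otimes> a) \<otimes> q \<oplus> (x \<otimes> y) \<otimes> (a \<otimes> b)"
        using p q a b M.Icarr by (simp add: l_distr r_distr m_ac a_ac)
      also have "\<dots> \<in> M"
        using p q a b ab M.Icarr
        by (intro M.a_closed M.I_r_closed[of p] M.I_l_closed[of q] M.I_l_closed[of "a \<otimes> b"]) auto
      finally show False
        using M_avoid by metis
    qed
  qed
  moreover have "f \<notin> M"
    using M_avoid[of 1] f by simp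
  ultimately show ?thesis
    using that M(2) by metis
qed

lemma (in ring) Union_rcos_image:
  assumes "ideal I R" "ideal J R" "I \<subseteq> J"
  shows "\<Union> ((+>) I ` J) = J"
  using ideal_incl_iff[OF assms(1,2)] assms(3) by simp

lemma (in ring) rcos_image_subset_iff:
  assumes I: "ideal I R" and J: "ideal J R" "I \<subseteq> J" and S: "S \<subseteq> carrier R"
  shows "(+>) I ` S \<subseteq> (+>) I ` J \<longleftrightarrow> S \<subseteq> J"
proof
  assume sub: "(+>) I ` S \<subseteq> (+>) I ` J"
  have J_quot: "(+>) I ` J \<subseteq> carrier (R Quot I)"
  proof (rule image_subsetI)
    fix j assume "j \<in> J"
    then show "I +> j \<in> carrier (R Quot I)"
      using ring_hom_closed[OF ideal.rcos_ring_hom[OF I] ideal.Icarr[OF J(1)]] by blast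
  qed
  show "S \<subseteq> J"
  proof
    fix s assume "s \<in> S"
    then have "I +> s \<in> (+>) I ` J"
      using sub by blast
    moreover have "s \<in> \<Union> ((+>) I ` J) \<longleftrightarrow> I +> s \<in> (+>) I ` J"
      using \<open>s \<in> S\<close> S by (intro canonical_proj_vimage_mem_iff[OF I J_quot]) blast
    ultimately show "s \<in> J"
      using Union_rcos_image[OF I J] by simp
  qed
qed (rule image_mono)

lemma (in ring) subset_rcos_image_iff:
  assumes I: "ideal I R" and J: "ideal J R" "I \<subseteq> J" and S: "S \<subseteq> carrier (R Quot I)"
  shows "S \<subseteq> (+>) I ` J \<longleftrightarrow> \<Union>S \<subseteq> J"
proof
  assume "S \<subseteq> (+>) I ` J"
  then show "\<Union>S \<subseteq> J"
    using Union_rcos_image[OF I J] by blast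
next
  assume sub: "\<Union>S \<subseteq> J"
  show "S \<subseteq> (+>) I ` J"
  proof
    fix C assume "C \<in> S"
    then obtain a where a: "a \<in> carrier R" "C = I +> a"
      using S unfolding FactRing_def A_RCOSETS_def' by auto
    then have "a \<in> \<Union>S"
      using canonical_proj_vimage_mem_iff[OF I S a(1)] \<open>C \<in> S\<close> by simp
    then have "a \<in> J"
      using sub by blast
    then show "C \<in> (+>) I ` J"
      using a(2) by blast
  qed
qed

lemma (in cring) primeideal_rcos_image:
  assumes I: "ideal I R" and P: "primeideal P R" "I \<subseteq> P"
  shows "primeideal ((+>) I ` P) (R Quot I)"
proof -
  interpret P: primeideal P R
    by (rule P(1))
  interpret I: ideal I R
    by (rule I)
  have rcos: "(+>) I \<in> ring_hom R (R Quot I)"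
    by (rule I.rcos_ring_hom)
  have mem_iff: "I +> a \<in> (+>) I ` P \<longleftrightarrow> a \<in> P" if "a \<in> carrier R" for a
    using rcos_image_subset_iff[OF I P.is_ideal P(2), of "{a}"] that by simp
  show ?thesis
  proof (rule primeidealI[OF ring_ideal_imp_quot_ideal[OF I P.is_ideal]
        I.quotient_is_cring[OF is_cring]])
    show "carrier (R Quot I) \<noteq> (+>) I ` P"
      using mem_iff[OF one_closed] ring_hom_closed[OF rcos one_closed] P.I_notcarr P.one_imp_carrier
      by blast
    fix A B
    assume "A \<in> carrier (R Quot I)" "B \<in> carrier (R Quot I)" "A \<otimes>\<^bsub>R Quot I\<^esub> B \<in> (+>) I ` P"
    moreover obtain a b where "a \<in> carrier R" "A = I +> a" "b \<in> carrier R" "B = I +> b"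
      using calculation(1,2) unfolding FactRing_def A_RCOSETS_def' by auto
    ultimately have "I +> (a \<otimes> b) \<in> (+>) I ` P"
      using ring_hom_mult[OF rcos] by simp
    then have "a \<in> P \<or> b \<in> P"
      using mem_iff P.I_prime \<open>a \<in> carrier R\<close> \<open>b \<in> carrier R\<close> by simp
    then show "A \<in> (+>) I ` P \<or> B \<in> (+>) I ` P"
      using mem_iff \<open>A = I +> a\<close> \<open>B = I +> b\<close> \<open>a \<in> carrier R\<close> \<open>b \<in> carrier R\<close> by simp
  qed
qed

lemma (in cring) quot_primeidealE:
  assumes I: "ideal I R" and Q: "primeideal Q (R Quot I)"
  obtains P where "primeideal P R" "I \<subseteq> P" "Q = (+>) I ` P"
proof -
  obtain P where P: "ideal P R" "I \<subseteq> P" "Q = (+>) I ` P"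
    using bij_betw_imp_surj_on[OF quot_ideal_correspondence[OF I]] primeideal.axioms(1)[OF Q]
    by blast
  have "{r \<in> carrier R. I +> r \<in> Q} = P"
    using P rcos_image_subset_iff[OF I P(1,2), of "{r}" for r] ideal.Icarr[OF P(1)] by auto
  moreover have "primeideal {r \<in> carrier R. I +> r \<in> Q} R"
    by (rule ring_hom_ring.primeideal_vimage[OF ideal.rcos_ring_hom_ring[OF I] is_cring Q])
  ultimately show ?thesis
    using that P(2,3) by simp
qed

section \<open>The Zariski topology pulled back along a map to prime ideals\<close>

definition zero_locus :: "'x set \<Rightarrow> ('x \<Rightarrow> 'a set) \<Rightarrow> 'a set \<Rightarrow> 'x set"
  where "zero_locus Sp c S = {x \<in> Sp. S \<subseteq> c x}"

definition zariski_on :: "('a, 'b) ring_scheme \<Rightarrow> 'x set \<Rightarrow> ('x \<Rightarrow> 'a set) \<Rightarrow> 'x topology"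
  where "zariski_on R Sp c =
    topology (\<lambda>U. U \<subseteq> Sp \<and> (\<exists>S. S \<subseteq> carrier R \<and> Sp - U = zero_locus Sp c S))"

lemma zariskiR_eq_zariski_on: "zariskiR A = zariski_on A (SpecR A) (\<lambda>P. P)"
  unfolding zariskiR_def zariski_on_def zero_locus_def by (rule refl)

locale prime_ideal_map = cring R for R (structure) +
  fixes Sp :: "'x set" and c :: "'x \<Rightarrow> 'a set"
  assumes primeideal_c: "x \<in> Sp \<Longrightarrow> primeideal (c x) R"
begin

abbreviation "V \<equiv> zero_locus Sp c"
abbreviation "Zar \<equiv> zariski_on R Sp c"

lemma ideal_c: "x \<in> Sp \<Longrightarrow> ideal (c x) R"
  using primeideal_c by (rule primeideal.axioms(1))

lemma c_subset_carrier:
  assumes "x \<in> Sp"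
  shows "c x \<subseteq> carrier R"
proof -
  interpret primeideal "c x" R
    by (rule primeideal_c[OF assms])
  show ?thesis
    by (rule a_subset)
qed

lemma one_notin_c:
  assumes "x \<in> Sp"
  shows "\<one> \<notin> c x"
proof -
  interpret primeideal "c x" R
    by (rule primeideal_c[OF assms])
  show ?thesis
    using I_notcarr one_imp_carrier by blast
qed

lemma zero_locus_subset: "V S \<subseteq> Sp"
  unfolding zero_locus_def by blast

lemma zero_locus_antimono: "S \<subseteq> S' \<Longrightarrow> V S' \<subseteq> V S"
  unfolding zero_locus_def by blast

lemma zero_locus_carrier: "V (carrier R) = {}"
  unfolding zero_locus_def using c_subset_carrier one_notin_c by blast

lemma zero_locus_UN: "V (\<Union>i\<in>K. S i) = Sp \<inter> (\<Inter>i\<in>K. V (S i))"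
  unfolding zero_locus_def by blast

lemma zero_locus_Un_mult:
  assumes "S \<subseteq> carrier R" "S' \<subseteq> carrier R"
  shows "V S \<union> V S' = V {s \<otimes> t | s t. s \<in> S \<and> t \<in> S'}"
proof (intro equalityI subsetI)
  fix x assume "x \<in> V S \<union> V S'"
  then have x: "x \<in> Sp" and "S \<subseteq> c x \<or> S' \<subseteq> c x"
    unfolding zero_locus_def by auto
  interpret primeideal "c x" R
    by (rule primeideal_c[OF x])
  have "s \<otimes> t \<in> c x" if "s \<in> S" "t \<in> S'" for s t
    using \<open>S \<subseteq> c x \<or> S' \<subseteq> c x\<close> that assms I_l_closed I_r_closed by blast
  then show "x \<in> V {s \<otimes> t | s t. s \<in> S \<and> t \<in> S'}"
    unfolding zero_locus_def using x by blast
next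
  fix x assume "x \<in> V {s \<otimes> t | s t. s \<in> S \<and> t \<in> S'}"
  then have x: "x \<in> Sp" and st: "\<And>s t. s \<in> S \<Longrightarrow> t \<in> S' \<Longrightarrow> s \<otimes> t \<in> c x"
    unfolding zero_locus_def by blast+
  interpret primeideal "c x" R
    by (rule primeideal_c[OF x])
  have "S \<subseteq> c x \<or> S' \<subseteq> c x"
    using st assms I_prime by blast
  then show "x \<in> V S \<union> V S'"
    unfolding zero_locus_def using x by blast
qed

lemma istopology_zariski: "istopology (\<lambda>U. U \<subseteq> Sp \<and> (\<exists>S. S \<subseteq> carrier R \<and> Sp - U = V S))"
  unfolding istopology_def
proof (rule conjI; intro allI impI)
  fix U W
  assume "U \<subseteq> Sp \<and> (\<exists>S. S \<subseteq> carrier R \<and> Sp - U = V S)"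
    and "W \<subseteq> Sp \<and> (\<exists>S. S \<subseteq> carrier R \<and> Sp - W = V S)"
  then obtain S S' where S: "S \<subseteq> carrier R" "Sp - U = V S" and S': "S' \<subseteq> carrier R" "Sp - W = V S'"
    and "U \<subseteq> Sp"
    by blast
  have "Sp - (U \<inter> W) = V {s \<otimes> t | s t. s \<in> S \<and> t \<in> S'}"
    using zero_locus_Un_mult[OF S(1) S'(1)] S(2) S'(2) by blast
  moreover have "{s \<otimes> t | s t. s \<in> S \<and> t \<in> S'} \<subseteq> carrier R"
    using S(1) S'(1) by blast
  ultimately show "U \<inter> W \<subseteq> Sp \<and> (\<exists>S. S \<subseteq> carrier R \<and> Sp - (U \<inter> W) = V S)"
    using \<open>U \<subseteq> Sp\<close> by blast
next
  fix K assume "\<forall>U\<in>K. U \<subseteq> Sp \<and> (\<exists>S. S \<subseteq> carrier R \<and> Sp - U = V S)"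
  then obtain S where S: "\<And>U. U \<in> K \<Longrightarrow> U \<subseteq> Sp \<and> S U \<subseteq> carrier R \<and> Sp - U = V (S U)"
    by metis
  have "Sp - \<Union>K = V (\<Union>U\<in>K. S U)"
    unfolding zero_locus_UN using S by blast
  moreover have "(\<Union>U\<in>K. S U) \<subseteq> carrier R"
    using S by blast
  ultimately show "\<Union>K \<subseteq> Sp \<and> (\<exists>S. S \<subseteq> carrier R \<and> Sp - \<Union>K = V S)"
    using S by blast
qed

lemma openin_zariski: "openin Zar U \<longleftrightarrow> U \<subseteq> Sp \<and> (\<exists>S. S \<subseteq> carrier R \<and> Sp - U = V S)"
  unfolding zariski_on_def using topology_inverse'[OF istopology_zariski] by simp

lemma topspace_zariski: "topspace Zar = Sp"
proof -
  have "openin Zar Sp"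
    unfolding openin_zariski using zero_locus_carrier by blast
  then show ?thesis
    unfolding topspace_def openin_zariski by blast
qed

lemma closedin_zariski: "closedin Zar C \<longleftrightarrow> (\<exists>S. S \<subseteq> carrier R \<and> C = V S)"
proof -
  have "Sp - (Sp - C) = C" if "C \<subseteq> Sp"
    using that by blast
  then show ?thesis
    unfolding closedin_def topspace_zariski openin_zariski
    using zero_locus_subset by auto
qed

lemma closedin_zero_locus: "S \<subseteq> carrier R \<Longrightarrow> closedin Zar (V S)"
  unfolding closedin_zariski by blast

lemma closure_of_point:
  assumes "x \<in> Sp"
  shows "Zar closure_of {x} = V (c x)"
proof
  show "Zar closure_of {x} \<subseteq> V (c x)"
    using assms c_subset_carrier closedin_zero_locus
    by (intro closure_of_minimal) (auto simp: zero_locus_def)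
  have "closedin Zar (Zar closure_of {x})"
    by (rule closedin_closure_of)
  then obtain S where S: "S \<subseteq> carrier R" "Zar closure_of {x} = V S"
    unfolding closedin_zariski by blast
  have "x \<in> Zar closure_of {x}"
    using closure_of_subset[of "{x}" Zar] assms by (simp add: topspace_zariski)
  then have "S \<subseteq> c x"
    unfolding S(2) zero_locus_def by blast
  then show "V (c x) \<subseteq> Zar closure_of {x}"
    unfolding S(2) by (rule zero_locus_antimono)
qed

lemma t0_space_iff_inj: "t0_space Zar \<longleftrightarrow> inj_on c Sp"
proof
  assume t0: "t0_space Zar"
  show "inj_on c Sp"
  proof (rule inj_onI, rule ccontr)
    fix x y assume "x \<in> Sp" "y \<in> Sp" "c x = c y" "x \<noteq> y"
    then obtain C where "closedin Zar C" "x \<notin> C \<longleftrightarrow> y \<in> C"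
      using t0 unfolding t0_space topspace_zariski by blast
    then show False
      using \<open>x \<in> Sp\<close> \<open>y \<in> Sp\<close> \<open>c x = c y\<close>
      unfolding closedin_zariski zero_locus_def by auto
  qed
next
  assume inj: "inj_on c Sp"
  show "t0_space Zar"
    unfolding t0_space topspace_zariski
  proof (intro ballI impI)
    fix x y assume x: "x \<in> Sp" and y: "y \<in> Sp" and "x \<noteq> y"
    then have "\<not> c x \<subseteq> c y \<or> \<not> c y \<subseteq> c x"
      using inj by (meson inj_onD subset_antisym)
    then show "\<exists>C. closedin Zar C \<and> (x \<notin> C \<longleftrightarrow> y \<in> C)"
      using closedin_zero_locus[OF c_subset_carrier[OF x]]
        closedin_zero_locus[OF c_subset_carrier[OF y]] x y
      unfolding zero_locus_def by blast
  qed
qed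

definition basic_open :: "'a \<Rightarrow> 'x set"
  where "basic_open f = Sp - V {f}"

lemma mem_basic_open: "x \<in> basic_open f \<longleftrightarrow> x \<in> Sp \<and> f \<notin> c x"
  unfolding basic_open_def zero_locus_def by blast

lemma openin_basic_open: "f \<in> carrier R \<Longrightarrow> openin Zar (basic_open f)"
  unfolding openin_zariski basic_open_def using zero_locus_subset by blast

lemma basic_open_one: "basic_open \<one> = Sp"
  using one_notin_c by (auto simp: mem_basic_open)

lemma basic_open_mult:
  assumes "f \<in> carrier R" "g \<in> carrier R"
  shows "basic_open (f \<otimes> g) = basic_open f \<inter> basic_open g"
proof -
  have "f \<otimes> g \<in> c x \<longleftrightarrow> f \<in> c x \<or> g \<in> c x" if "x \<in> Sp" for x
  proof -
    interpret primeideal "c x" R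
      by (rule primeideal_c[OF that])
    show ?thesis
      using assms I_prime I_l_closed I_r_closed by blast
  qed
  then show ?thesis
    by (auto simp: mem_basic_open)
qed

lemma openin_eq_Union_basic_open:
  assumes "openin Zar U"
  obtains S where "S \<subseteq> carrier R" "U = \<Union> (basic_open ` S)"
proof -
  obtain S where S: "S \<subseteq> carrier R" "Sp - U = V S" and "U \<subseteq> Sp"
    using assms unfolding openin_zariski by blast
  then have "U = Sp - V S"
    by blast
  also have "\<dots> = \<Union> (basic_open ` S)"
    unfolding basic_open_def zero_locus_def by blast
  finally show ?thesis
    by (rule that[OF S(1)])
qed

end

locale prime_ideal_map_onto = prime_ideal_map +
  fixes I :: "'a set"
  assumes ideal_I: "ideal I R"
    and image_c: "c ` Sp = {P. primeideal P R \<and> I \<subseteq> P}"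
begin

lemma I_subset_c: "x \<in> Sp \<Longrightarrow> I \<subseteq> c x"
  using image_c by blast

lemma primeideal_imageE:
  assumes "primeideal P R" "I \<subseteq> P"
  obtains x where "x \<in> Sp" "c x = P"
  using assms image_c by (metis (mono_tags, lifting) imageE mem_Collect_eq)

lemma zero_locus_subset_finite:
  assumes S: "S \<subseteq> carrier R" and f: "f \<in> carrier R" and sub: "V S \<subseteq> V {f}"
  obtains F where "finite F" "F \<subseteq> S" "V F \<subseteq> V {f}"
proof -
  have SI: "S \<union> I \<subseteq> carrier R"
    using S ideal.Icarr[OF ideal_I] by blast
  have "\<exists>n::nat. f [^] n \<in> Idl (S \<union> I)"
  proof (rule ccontr)
    assume "\<not> ?thesis"
    then obtain P where P: "primeideal P R" "Idl (S \<union> I) \<subseteq> P" "f \<notin> P"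
      using primeideal_avoiding_powers[OF genideal_ideal[OF SI] f] by blast
    moreover have "S \<union> I \<subseteq> P"
      using genideal_self[OF SI] P(2) by blast
    ultimately obtain x where "x \<in> Sp" "c x = P"
      using primeideal_imageE by blast
    then show False
      using sub \<open>S \<union> I \<subseteq> P\<close> \<open>f \<notin> P\<close> unfolding zero_locus_def by blast
  qed
  then obtain n :: nat and F' where F': "finite F'" "F' \<subseteq> S \<union> I" "f [^] n \<in> Idl F'"
    using genideal_finite_subset[OF SI] by metis
  have "V (F' \<inter> S) \<subseteq> V {f}"
  proof
    fix x assume x: "x \<in> V (F' \<inter> S)"
    then have "x \<in> Sp" "F' \<subseteq> c x"
      using F'(2) I_subset_c unfolding zero_locus_def by blast+
    then have "f [^] n \<in> c x"
      using F'(3) genideal_minimal[OF ideal_c] by blast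
    then have "f \<in> c x"
      using primeideal.nat_pow_mem_imp_mem[OF primeideal_c[OF \<open>x \<in> Sp\<close>] f] by blast
    then show "x \<in> V {f}"
      using \<open>x \<in> Sp\<close> unfolding zero_locus_def by blast
  qed
  then show ?thesis
    using that F'(1) by blast
qed

lemma compactin_basic_open:
  assumes f: "f \<in> carrier R"
  shows "compactin Zar (basic_open f)"
  unfolding compactin_def
proof (intro conjI allI impI)
  show "basic_open f \<subseteq> topspace Zar"
    unfolding topspace_zariski basic_open_def by blast
  fix \<U> assume "(\<forall>U\<in>\<U>. openin Zar U) \<and> basic_open f \<subseteq> \<Union>\<U>"
  then have opens: "\<And>U. U \<in> \<U> \<Longrightarrow> openin Zar U" and cover: "basic_open f \<subseteq> \<Union>\<U>"
    by simp_all
  have "\<exists>T. U \<subseteq> Sp \<and> T \<subseteq> carrier R \<and> Sp - U = V T" if "U \<in> \<U>" for U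
    using opens[OF that] unfolding openin_zariski by blast
  then obtain S where S: "\<And>U. U \<in> \<U> \<Longrightarrow> U \<subseteq> Sp \<and> S U \<subseteq> carrier R \<and> Sp - U = V (S U)"
    by metis
  have Union_eq: "\<Union>\<W> = Sp - V (\<Union>U\<in>\<W>. S U)" if "\<W> \<subseteq> \<U>" for \<W>
    unfolding zero_locus_UN using S that by blast
  have covers_iff: "basic_open f \<subseteq> Sp - V T \<longleftrightarrow> V T \<subseteq> V {f}" for T
    unfolding basic_open_def zero_locus_def by blast
  have carrier: "(\<Union>U\<in>\<U>. S U) \<subseteq> carrier R"
    using S by blast
  have "V (\<Union>U\<in>\<U>. S U) \<subseteq> V {f}"
    using cover unfolding Union_eq[OF order_refl] covers_iff .
  then obtain F where F: "finite F" "F \<subseteq> (\<Union>U\<in>\<U>. S U)" "V F \<subseteq> V {f}"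
    by (rule zero_locus_subset_finite[OF carrier f])
  then obtain \<F> where \<F>: "finite \<F>" "\<F> \<subseteq> S ` \<U>" "F \<subseteq> \<Union>\<F>"
    using finite_subset_Union[OF F(1,2)] by blast
  then obtain \<W> where \<W>: "finite \<W>" "\<W> \<subseteq> \<U>" "\<F> = S ` \<W>"
    using finite_subset_image[OF \<F>(1,2)] by blast
  have "V (\<Union>U\<in>\<W>. S U) \<subseteq> V {f}"
    using zero_locus_antimono[of F] \<F>(3) \<W>(3) F(3) by blast
  then have "basic_open f \<subseteq> \<Union>\<W>"
    using Union_eq[OF \<W>(2)] covers_iff by simp
  then show "\<exists>\<F>. finite \<F> \<and> \<F> \<subseteq> \<U> \<and> basic_open f \<subseteq> \<Union>\<F>"
    using \<W>(1,2) by blast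
qed

lemma compact_space_zariski: "compact_space Zar"
  unfolding compact_space_def topspace_zariski
  using compactin_basic_open[OF one_closed] by (simp add: basic_open_one)

lemma compactin_open_eq_finite_Union_basic_open:
  assumes "openin Zar U" "compactin Zar U"
  obtains F where "finite F" "F \<subseteq> carrier R" "U = \<Union> (basic_open ` F)"
proof -
  obtain S where S: "S \<subseteq> carrier R" "U = \<Union> (basic_open ` S)"
    using openin_eq_Union_basic_open[OF assms(1)] by blast
  have "\<forall>W\<in>basic_open ` S. openin Zar W"
    using S(1) openin_basic_open by blast
  moreover have "\<forall>\<U>. (\<forall>W\<in>\<U>. openin Zar W) \<and> U \<subseteq> \<Union>\<U> \<longrightarrow> (\<exists>\<F>. finite \<F> \<and> \<F> \<subseteq> \<U> \<and> U \<subseteq> \<Union>\<F>)"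
    using assms(2) unfolding compactin_def by (rule conjunct2)
  ultimately have "\<exists>\<F>. finite \<F> \<and> \<F> \<subseteq> basic_open ` S \<and> U \<subseteq> \<Union>\<F>"
    using S(2) by simp
  then obtain \<F> where \<F>: "finite \<F>" "\<F> \<subseteq> basic_open ` S" "U \<subseteq> \<Union>\<F>"
    by blast
  then obtain F where F: "F \<subseteq> S" "finite F" "\<F> = basic_open ` F"
    using finite_subset_image[OF \<F>(1,2)] by blast
  have "U \<subseteq> \<Union> (basic_open ` F)"
    using \<F>(3) F(3) by simp
  moreover have "\<Union> (basic_open ` F) \<subseteq> U"
    using F(1) S(2) by (simp add: UN_mono)
  ultimately have "U = \<Union> (basic_open ` F)"
    by (rule subset_antisym)
  with F(1,2) S(1) show ?thesis
    by (intro that) auto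
qed

lemma compactin_Int:
  assumes "openin Zar U" "compactin Zar U" "openin Zar W" "compactin Zar W"
  shows "compactin Zar (U \<inter> W)"
proof -
  obtain F where F: "finite F" "F \<subseteq> carrier R" "U = \<Union> (basic_open ` F)"
    using compactin_open_eq_finite_Union_basic_open[OF assms(1,2)] by blast
  obtain G where G: "finite G" "G \<subseteq> carrier R" "W = \<Union> (basic_open ` G)"
    using compactin_open_eq_finite_Union_basic_open[OF assms(3,4)] by blast
  have mult: "basic_open (f \<otimes> g) = basic_open f \<inter> basic_open g" if "f \<in> F" "g \<in> G" for f g
    using that F(2) G(2) by (intro basic_open_mult) auto
  have "U \<inter> W = \<Union> ((\<lambda>(f, g). basic_open (f \<otimes> g)) ` (F \<times> G))"
    unfolding F(3) G(3) using mult by auto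
  moreover have "compactin Zar (basic_open (f \<otimes> g))" if "f \<in> F" "g \<in> G" for f g
    using that F(2) G(2) by (intro compactin_basic_open m_closed) auto
  then have "compactin Zar (\<Union> ((\<lambda>(f, g). basic_open (f \<otimes> g)) ` (F \<times> G)))"
    using F(1) G(1) by (intro compactin_Union) auto
  ultimately show ?thesis
    by simp
qed

lemma open_Union_compact_opens:
  assumes "openin Zar U"
  shows "\<exists>\<F>. (\<forall>W\<in>\<F>. openin Zar W \<and> compactin Zar W) \<and> \<Union>\<F> = U"
proof -
  obtain S where "S \<subseteq> carrier R" "U = \<Union> (basic_open ` S)"
    using openin_eq_Union_basic_open[OF assms] by blast
  then show ?thesis
    using openin_basic_open compactin_basic_open by (intro exI[of _ "basic_open ` S"]) auto
qed

text \<open>The generic point of an irreducible closed set \<open>Z\<close> lies over the intersection of the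
  prime ideals \<open>c z\<close>, \<open>z \<in> Z\<close>, which is prime by irreducibility.\<close>

lemma irreducible_closed_has_generic_point:
  assumes "closedin Zar Z" "irreducible_in Zar Z"
  shows "\<exists>x\<in>Z. Zar closure_of {x} = Z"
proof -
  obtain S where S: "S \<subseteq> carrier R" "Z = V S"
    using assms(1) unfolding closedin_zariski by blast
  have "Z \<noteq> {}" and irreducible: "\<And>A B. closedin Zar A \<Longrightarrow> closedin Zar B \<Longrightarrow> Z \<subseteq> A \<union> B
      \<Longrightarrow> Z \<subseteq> A \<or> Z \<subseteq> B"
    using assms(2) unfolding irreducible_in_def by blast+
  have Z_Sp: "Z \<subseteq> Sp"
    using S(2) zero_locus_subset by blast
  define P where "P = \<Inter> (c ` Z)"
  have "primeideal P R"
  proof (rule primeidealI[OF _ is_cring])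
    show "ideal P R"
      unfolding P_def using \<open>Z \<noteq> {}\<close> Z_Sp ideal_c by (intro i_Intersect) auto
    show "carrier R \<noteq> P"
      unfolding P_def using \<open>Z \<noteq> {}\<close> Z_Sp one_notin_c by blast
    fix a b assume a: "a \<in> carrier R" and b: "b \<in> carrier R" and "a \<otimes> b \<in> P"
    then have "Z \<subseteq> V {a \<otimes> b}"
      unfolding P_def zero_locus_def using Z_Sp by blast
    also have "V {a \<otimes> b} = V {a} \<union> V {b}"
      using zero_locus_Un_mult[of "{a}" "{b}"] a b by simp
    finally have "Z \<subseteq> V {a} \<or> Z \<subseteq> V {b}"
      using irreducible closedin_zero_locus a b by simp
    then show "a \<in> P \<or> b \<in> P"
      unfolding P_def zero_locus_def by blast
  qed
  moreover have "I \<subseteq> P" "S \<subseteq> P"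
    unfolding P_def using Z_Sp I_subset_c S(2) unfolding zero_locus_def by blast+
  ultimately obtain x where x: "x \<in> Sp" "c x = P"
    using primeideal_imageE by blast
  have "V P = Z"
    using \<open>S \<subseteq> P\<close> S(2) Z_Sp zero_locus_antimono[of S P] unfolding P_def zero_locus_def by blast
  moreover have "x \<in> Z"
    using x \<open>S \<subseteq> P\<close> S(2) unfolding zero_locus_def by blast
  ultimately show ?thesis
    using closure_of_point[OF x(1)] x(2) by auto
qed

theorem spectral_space_iff_t0_space: "spectral_space Zar \<longleftrightarrow> t0_space Zar"
  unfolding spectral_space_def
  by (simp add: compact_space_zariski compactin_Int open_Union_compact_opens
      irreducible_closed_has_generic_point)

sublocale quotient: prime_ideal_map "R Quot I" "SpecR (R Quot I)" "\<lambda>P. P"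
  using ideal.quotient_is_cring[OF ideal_I is_cring]
  by (simp add: prime_ideal_map_def prime_ideal_map_axioms_def SpecR_def)

abbreviation quot_prime
  where "quot_prime x \<equiv> (+>) I ` c x"

lemma Union_quot_prime: "x \<in> Sp \<Longrightarrow> \<Union> (quot_prime x) = c x"
  by (rule Union_rcos_image[OF ideal_I ideal_c I_subset_c])

lemma image_quot_prime: "quot_prime ` Sp = SpecR (R Quot I)"
proof (intro equalityI subsetI)
  fix Q assume "Q \<in> quot_prime ` Sp"
  then show "Q \<in> SpecR (R Quot I)"
    unfolding SpecR_def using primeideal_rcos_image[OF ideal_I primeideal_c I_subset_c] by blast
next
  fix Q assume "Q \<in> SpecR (R Quot I)"
  then obtain P where P: "primeideal P R" "I \<subseteq> P" "Q = (+>) I ` P"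
    unfolding SpecR_def using quot_primeidealE[OF ideal_I] by blast
  obtain x where "x \<in> Sp" "c x = P"
    using primeideal_imageE[OF P(1,2)] by blast
  then show "Q \<in> quot_prime ` Sp"
    using P(3) by blast
qed

lemma quot_prime_in_SpecR: "x \<in> Sp \<Longrightarrow> quot_prime x \<in> SpecR (R Quot I)"
  using image_quot_prime by blast

lemma continuous_map_quot_prime: "continuous_map Zar quotient.Zar quot_prime"
  unfolding continuous_map_closedin topspace_zariski quotient.topspace_zariski
proof (intro conjI allI impI)
  show "quot_prime \<in> Sp \<rightarrow> SpecR (R Quot I)"
    using quot_prime_in_SpecR by blast
  fix C assume "closedin quotient.Zar C"
  then obtain S where S: "S \<subseteq> carrier (R Quot I)" "C = quotient.V S"
    unfolding quotient.closedin_zariski by blast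
  have "quot_prime x \<in> C \<longleftrightarrow> \<Union>S \<subseteq> c x" if "x \<in> Sp" for x
  proof -
    have "quot_prime x \<in> C \<longleftrightarrow> S \<subseteq> quot_prime x"
      using S(2) quot_prime_in_SpecR[OF that] unfolding zero_locus_def by simp
    also have "\<dots> \<longleftrightarrow> \<Union>S \<subseteq> c x"
      by (rule subset_rcos_image_iff[OF ideal_I ideal_c[OF that] I_subset_c[OF that] S(1)])
    finally show ?thesis .
  qed
  then have "{x \<in> Sp. quot_prime x \<in> C} = V (\<Union>S)"
    by (auto simp: zero_locus_def)
  then show "closedin Zar {x \<in> Sp. quot_prime x \<in> C}"
    using closedin_zero_locus canonical_proj_vimage_in_carrier[OF ideal_I S(1)] by simp
qed

lemma image_quot_prime_zero_locus:
  assumes S: "S \<subseteq> carrier R"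
  shows "quot_prime ` V S = quotient.V ((+>) I ` S)"
proof (intro equalityI subsetI)
  fix Q assume "Q \<in> quot_prime ` V S"
  then obtain x where x: "x \<in> Sp" "S \<subseteq> c x" "Q = quot_prime x"
    unfolding zero_locus_def by blast
  then show "Q \<in> quotient.V ((+>) I ` S)"
    using quot_prime_in_SpecR[OF x(1)] unfolding zero_locus_def by blast
next
  fix Q assume "Q \<in> quotient.V ((+>) I ` S)"
  then have "Q \<in> quot_prime ` Sp" "(+>) I ` S \<subseteq> Q"
    unfolding zero_locus_def image_quot_prime by blast+
  then obtain x where x: "x \<in> Sp" "Q = quot_prime x" "(+>) I ` S \<subseteq> quot_prime x"
    by blast
  then have "S \<subseteq> c x"
    using rcos_image_subset_iff[OF ideal_I ideal_c[OF x(1)] I_subset_c[OF x(1)] S] by simp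
  then show "Q \<in> quot_prime ` V S"
    using x(1,2) unfolding zero_locus_def by blast
qed

lemma closed_map_quot_prime: "closed_map Zar quotient.Zar quot_prime"
  unfolding closed_map_def
proof (intro allI impI)
  fix U assume "closedin Zar U"
  then obtain S where S: "S \<subseteq> carrier R" "U = V S"
    unfolding closedin_zariski by blast
  have "(+>) I ` S \<subseteq> carrier (R Quot I)"
  proof (rule image_subsetI)
    fix s assume "s \<in> S"
    then show "I +> s \<in> carrier (R Quot I)"
      using ring_hom_closed[OF ideal.rcos_ring_hom[OF ideal_I]] S(1) by blast
  qed
  then show "closedin quotient.Zar (quot_prime ` U)"
    unfolding S(2) image_quot_prime_zero_locus[OF S(1)] by (rule quotient.closedin_zero_locus)
qed

lemma homeomorphic_map_quot_prime:
  assumes inj: "inj_on c Sp"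
  shows "homeomorphic_map Zar quotient.Zar quot_prime"
proof (rule bijective_closed_imp_homeomorphic_map)
  show "quot_prime ` topspace Zar = topspace quotient.Zar"
    unfolding topspace_zariski quotient.topspace_zariski by (rule image_quot_prime)
  show "inj_on quot_prime (topspace Zar)"
    unfolding topspace_zariski
  proof (rule inj_onI)
    fix x y assume x: "x \<in> Sp" and y: "y \<in> Sp" and "quot_prime x = quot_prime y"
    have "c x = \<Union> (quot_prime x)"
      by (rule Union_quot_prime[OF x, symmetric])
    also have "\<dots> = \<Union> (quot_prime y)"
      using \<open>quot_prime x = quot_prime y\<close> by (rule arg_cong)
    also have "\<dots> = c y"
      by (rule Union_quot_prime[OF y])
    finally show "x = y"
      using inj_onD[OF inj _ x y] by simp
  qed
qed (rule continuous_map_quot_prime, rule closed_map_quot_prime)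

theorem homeomorphic_space_quotient_iff_inj:
  "Zar homeomorphic_space zariskiR (R Quot I) \<longleftrightarrow> inj_on c Sp"
  unfolding zariskiR_eq_zariski_on
proof
  assume "Zar homeomorphic_space quotient.Zar"
  then have "t0_space Zar \<longleftrightarrow> t0_space quotient.Zar"
    by (rule homeomorphic_t0_space)
  then show "inj_on c Sp"
    using quotient.t0_space_iff_inj t0_space_iff_inj by simp
next
  assume "inj_on c Sp"
  then show "Zar homeomorphic_space quotient.Zar"
    unfolding homeomorphic_space using homeomorphic_map_quot_prime by blast
qed

end

section \<open>le-modules\<close>

lemma le_if_Sup_pair_preserving:
  fixes f :: "'a::complete_lattice \<Rightarrow> 'b::complete_lattice"
  assumes "f (Sup {a, b}) = Sup (f ` {a, b})" and "a \<le> b"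
  shows "f a \<le> f b"
proof -
  have "f b = sup (f a) (f b)"
    using assms by (simp add: sup_absorb2)
  then show ?thesis
    by (metis sup.cobounded1)
qed

locale le_mod =
  fixes R :: "('r, 'b) ring_scheme" (structure)
    and pl :: "'m::complete_lattice \<Rightarrow> 'm \<Rightarrow> 'm" and z :: 'm and sm :: "'r \<Rightarrow> 'm \<Rightarrow> 'm"
  assumes le_module: "le_module R pl z sm"
begin

sublocale cring R
  using le_module unfolding le_module_def by blast

abbreviation e :: 'm
  where "e \<equiv> Orderings.top"

lemma
  shows pl_Sup: "A \<noteq> {} \<Longrightarrow> pl m (Sup A) = Sup (pl m ` A)"
    and pl_commute: "pl m n = pl n m"
    and pl_z: "pl z m = m"
    and sm_add_le: "r \<in> carrier R \<Longrightarrow> s \<in> carrier R \<Longrightarrow> sm (r \<oplus> s) m \<le> pl (sm r m) (sm s m)"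
    and sm_mult: "r \<in> carrier R \<Longrightarrow> s \<in> carrier R \<Longrightarrow> sm (r \<otimes> s) m = sm r (sm s m)"
    and sm_one: "sm \<one> m = m"
    and sm_zero: "sm \<zero> m = z"
    and sm_z: "r \<in> carrier R \<Longrightarrow> sm r z = z"
    and sm_Sup: "r \<in> carrier R \<Longrightarrow> sm r (Sup A) = Sup (sm r ` A)"
  using le_module unfolding le_module_def by blast+

lemma sm_mono: "r \<in> carrier R \<Longrightarrow> m \<le> n \<Longrightarrow> sm r m \<le> sm r n"
  by (rule le_if_Sup_pair_preserving[OF sm_Sup])

lemma pl_mono_right: "n \<le> n' \<Longrightarrow> pl m n \<le> pl m n'"
  by (rule le_if_Sup_pair_preserving[of "pl m", OF pl_Sup]) simp_all

lemma pl_mono: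
  assumes "m \<le> m'" "n \<le> n'"
  shows "pl m n \<le> pl m' n'"
proof -
  have "pl m n \<le> pl m n'"
    using assms(2) by (rule pl_mono_right)
  also have "\<dots> = pl n' m"
    by (rule pl_commute)
  also have "\<dots> \<le> pl n' m'"
    using assms(1) by (rule pl_mono_right)
  also have "\<dots> = pl m' n'"
    by (rule pl_commute)
  finally show ?thesis .
qed

lemma z_le_submodule_elem:
  assumes "submodule_elem R pl sm n"
  shows "z \<le> n"
proof -
  have "sm \<zero> n \<le> n"
    using assms unfolding submodule_elem_def by simp
  then show ?thesis
    by (simp add: sm_zero)
qed

lemma submodule_elem_z: "submodule_elem R pl sm z"
  unfolding submodule_elem_def by (simp add: pl_z sm_z)

lemma submodule_elem_Inf:
  assumes "\<And>n. n \<in> N \<Longrightarrow> submodule_elem R pl sm n"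
  shows "submodule_elem R pl sm (Inf N)"
  unfolding submodule_elem_def
proof (intro conjI ballI)
  show "pl (Inf N) (Inf N) \<le> Inf N"
  proof (rule Inf_greatest)
    fix n assume "n \<in> N"
    then have "pl (Inf N) (Inf N) \<le> pl n n"
      by (intro pl_mono Inf_lower)
    also have "\<dots> \<le> n"
      using assms[OF \<open>n \<in> N\<close>] unfolding submodule_elem_def by simp
    finally show "pl (Inf N) (Inf N) \<le> n" .
  qed
  fix r assume r: "r \<in> carrier R"
  show "sm r (Inf N) \<le> Inf N"
  proof (rule Inf_greatest)
    fix n assume "n \<in> N"
    then have "sm r (Inf N) \<le> sm r n"
      by (intro sm_mono[OF r] Inf_lower)
    also have "\<dots> \<le> n"
      using assms[OF \<open>n \<in> N\<close>] r unfolding submodule_elem_def by simp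
    finally show "sm r (Inf N) \<le> n" .
  qed
qed

lemma submodule_elem_if_SpecM: "p \<in> SpecM R pl sm \<Longrightarrow> submodule_elem R pl sm p"
  unfolding SpecM_def prime_submodule_elem_def by blast

lemma mult_mem_colon:
  assumes n: "submodule_elem R pl sm n" and a: "a \<in> colon R sm n" and x: "x \<in> carrier R"
  shows "x \<otimes> a \<in> colon R sm n"
proof -
  have "sm (x \<otimes> a) e = sm x (sm a e)"
    using a x by (simp add: sm_mult colon_def)
  also have "\<dots> \<le> sm x n"
    using a x by (intro sm_mono) (auto simp: colon_def)
  also have "\<dots> \<le> n"
    using n x unfolding submodule_elem_def by blast
  finally show ?thesis
    using a x by (simp add: colon_def)
qed

lemma add_mem_colon:
  assumes n: "submodule_elem R pl sm n" and "a \<in> colon R sm n" "b \<in> colon R sm n"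
  shows "a \<oplus> b \<in> colon R sm n"
proof -
  have ab: "a \<in> carrier R" "b \<in> carrier R" "sm a e \<le> n" "sm b e \<le> n"
    using assms(2,3) by (simp_all add: colon_def)
  have "sm (a \<oplus> b) e \<le> pl (sm a e) (sm b e)"
    by (rule sm_add_le[OF ab(1,2)])
  also have "\<dots> \<le> pl n n"
    by (rule pl_mono[OF ab(3,4)])
  also have "\<dots> \<le> n"
    using n unfolding submodule_elem_def by blast
  finally show ?thesis
    using ab by (simp add: colon_def)
qed

lemma ideal_colon:
  assumes n: "submodule_elem R pl sm n"
  shows "ideal (colon R sm n) R"
proof (rule idealI[OF ring_axioms])
  show "subgroup (colon R sm n) (add_monoid R)"
  proof (rule add.subgroupI)
    show "colon R sm n \<subseteq> carrier R"
      unfolding colon_def by blast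
    show "colon R sm n \<noteq> {}"
      using z_le_submodule_elem[OF n] sm_zero by (auto simp: colon_def)
  next
    fix a assume "a \<in> colon R sm n"
    then show "\<ominus> a \<in> colon R sm n"
      using mult_mem_colon[OF n, of a "\<ominus> \<one>"] by (simp add: colon_def l_minus)
  qed (rule add_mem_colon[OF n])
next
  fix a x assume "a \<in> colon R sm n" "x \<in> carrier R"
  then show "x \<otimes> a \<in> colon R sm n" "a \<otimes> x \<in> colon R sm n"
    using mult_mem_colon[OF n] m_comm[of a x] by (auto simp: colon_def)
qed

lemma primeideal_colon:
  assumes p: "p \<in> SpecM R pl sm"
  shows "primeideal (colon R sm p) R"
proof -
  have "p \<noteq> e"
    and prime: "\<And>r n. r \<in> carrier R \<Longrightarrow> sm r n \<le> p \<Longrightarrow> r \<in> colon R sm p \<or> n \<le> p"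
    using p unfolding SpecM_def prime_submodule_elem_def by blast+
  show ?thesis
  proof (rule primeidealI[OF ideal_colon[OF submodule_elem_if_SpecM[OF p]] is_cring])
    show "carrier R \<noteq> colon R sm p"
    proof
      assume "carrier R = colon R sm p"
      then have "\<one> \<in> colon R sm p"
        by (metis one_closed)
      then show False
        using \<open>p \<noteq> e\<close> by (simp add: colon_def sm_one top_unique)
    qed
    fix a b assume a: "a \<in> carrier R" and b: "b \<in> carrier R" and "a \<otimes> b \<in> colon R sm p"
    then have "sm a (sm b e) \<le> p"
      by (simp add: colon_def sm_mult)
    then show "a \<in> colon R sm p \<or> b \<in> colon R sm p"
      using prime[OF a] b by (simp add: colon_def)
  qed
qed

lemma ideal_Ann: "ideal (Ann R z sm) R"
  unfolding Ann_def by (rule ideal_colon[OF submodule_elem_z])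

lemma Ann_subset_colon: "submodule_elem R pl sm n \<Longrightarrow> Ann R z sm \<subseteq> colon R sm n"
  unfolding Ann_def colon_def using z_le_submodule_elem by (auto intro: order_trans)

lemma Vstar_eq_zero_locus:
  "Vstar R pl sm n = zero_locus (SpecM R pl sm) (colon R sm) (colon R sm n)"
  unfolding Vstar_def zero_locus_def by (rule refl)

text \<open>Every zero locus \<open>V(S)\<close> is some \<open>V*(n)\<close>: take for \<open>n\<close> the least submodule element
  with \<open>s e \<le> n\<close> for all \<open>s \<in> S\<close>.\<close>

lemma zero_locus_eq_Vstar:
  assumes "S \<subseteq> carrier R"
  obtains n where "submodule_elem R pl sm n"
    "zero_locus (SpecM R pl sm) (colon R sm) S = Vstar R pl sm n"
proof -
  define n where "n = Inf {n. submodule_elem R pl sm n \<and> S \<subseteq> colon R sm n}"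
  have n_sub: "submodule_elem R pl sm n"
    unfolding n_def by (rule submodule_elem_Inf) simp
  have "S \<subseteq> colon R sm n"
    using assms unfolding n_def colon_def by (auto intro: Inf_greatest)
  moreover have "colon R sm n \<subseteq> colon R sm p" if "p \<in> SpecM R pl sm" "S \<subseteq> colon R sm p" for p
  proof -
    have "n \<le> p"
      unfolding n_def using submodule_elem_if_SpecM[OF that(1)] that(2) by (intro Inf_lower) simp
    then show ?thesis
      unfolding colon_def by (auto intro: order_trans)
  qed
  ultimately have "S \<subseteq> colon R sm p \<longleftrightarrow> colon R sm n \<subseteq> colon R sm p" if "p \<in> SpecM R pl sm" for p
    using that by blast
  then have "zero_locus (SpecM R pl sm) (colon R sm) S = Vstar R pl sm n"
    unfolding Vstar_eq_zero_locus zero_locus_def by auto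
  with n_sub show ?thesis
    by (rule that)
qed

lemma zariskiM_eq_zariski_on: "zariskiM R pl sm = zariski_on R (SpecM R pl sm) (colon R sm)"
proof -
  have "(\<exists>n. submodule_elem R pl sm n \<and> C = Vstar R pl sm n)
    \<longleftrightarrow> (\<exists>S. S \<subseteq> carrier R \<and> C = zero_locus (SpecM R pl sm) (colon R sm) S)" for C
  proof
    assume "\<exists>n. submodule_elem R pl sm n \<and> C = Vstar R pl sm n"
    then obtain n where "C = zero_locus (SpecM R pl sm) (colon R sm) (colon R sm n)"
      unfolding Vstar_eq_zero_locus by blast
    moreover have "colon R sm n \<subseteq> carrier R"
      unfolding colon_def by blast
    ultimately show "\<exists>S. S \<subseteq> carrier R \<and> C = zero_locus (SpecM R pl sm) (colon R sm) S"
      by blast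
  next
    assume "\<exists>S. S \<subseteq> carrier R \<and> C = zero_locus (SpecM R pl sm) (colon R sm) S"
    then obtain S where "S \<subseteq> carrier R" "C = zero_locus (SpecM R pl sm) (colon R sm) S"
      by blast
    moreover from this(1) obtain n where "submodule_elem R pl sm n"
      "zero_locus (SpecM R pl sm) (colon R sm) S = Vstar R pl sm n"
      by (rule zero_locus_eq_Vstar)
    ultimately show "\<exists>n. submodule_elem R pl sm n \<and> C = Vstar R pl sm n"
      by blast
  qed
  then show ?thesis
    unfolding zariskiM_def zariski_on_def by simp
qed

lemma inj_on_colon_iff_Vstar:
  "inj_on (colon R sm) (SpecM R pl sm) \<longleftrightarrow>
    (\<forall>p\<in>SpecM R pl sm. \<forall>q\<in>SpecM R pl sm. Vstar R pl sm p = Vstar R pl sm q \<longrightarrow> p = q)"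
proof -
  have "Vstar R pl sm p = Vstar R pl sm q \<longleftrightarrow> colon R sm p = colon R sm q"
    if "p \<in> SpecM R pl sm" "q \<in> SpecM R pl sm" for p q
  proof
    assume eq: "Vstar R pl sm p = Vstar R pl sm q"
    have "p \<in> Vstar R pl sm p" "q \<in> Vstar R pl sm q"
      using that by (simp_all add: Vstar_def)
    then have "p \<in> Vstar R pl sm q" "q \<in> Vstar R pl sm p"
      by (simp_all add: eq)
    then show "colon R sm p = colon R sm q"
      by (auto simp: Vstar_def)
  qed (simp add: Vstar_def)
  then show ?thesis
    by (auto simp: inj_on_def)
qed

lemma inj_on_colon_iff_SpecP:
  "inj_on (colon R sm) (SpecM R pl sm) \<longleftrightarrow>
    (\<forall>P\<in>SpecR R. \<forall>p\<in>SpecP R pl sm P. \<forall>q\<in>SpecP R pl sm P. p = q)"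
proof
  assume "inj_on (colon R sm) (SpecM R pl sm)"
  then show "\<forall>P\<in>SpecR R. \<forall>p\<in>SpecP R pl sm P. \<forall>q\<in>SpecP R pl sm P. p = q"
    unfolding SpecP_def inj_on_def by auto
next
  assume unique: "\<forall>P\<in>SpecR R. \<forall>p\<in>SpecP R pl sm P. \<forall>q\<in>SpecP R pl sm P. p = q"
  show "inj_on (colon R sm) (SpecM R pl sm)"
  proof (rule inj_onI)
    fix p q assume "p \<in> SpecM R pl sm" "q \<in> SpecM R pl sm" "colon R sm p = colon R sm q"
    moreover have "colon R sm p \<in> SpecR R"
      using primeideal_colon[OF \<open>p \<in> SpecM R pl sm\<close>] by (simp add: SpecR_def)
    ultimately show "p = q"
      using unique unfolding SpecP_def by auto
  qed
qed

lemma psi_eq: "psi R z sm p = (+>) (Ann R z sm) ` colon R sm p"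
  unfolding psi_def by (rule refl)

lemma Union_psi: "p \<in> SpecM R pl sm \<Longrightarrow> \<Union> (psi R z sm p) = colon R sm p"
  unfolding psi_eq
  by (intro Union_rcos_image ideal_Ann ideal_colon Ann_subset_colon submodule_elem_if_SpecM)

lemma inj_on_colon_iff_psi:
  "inj_on (colon R sm) (SpecM R pl sm) \<longleftrightarrow> inj_on (psi R z sm) (SpecM R pl sm)"
proof
  assume inj: "inj_on (colon R sm) (SpecM R pl sm)"
  show "inj_on (psi R z sm) (SpecM R pl sm)"
  proof (rule inj_onI)
    fix p q assume p: "p \<in> SpecM R pl sm" and q: "q \<in> SpecM R pl sm"
      and "psi R z sm p = psi R z sm q"
    then have "colon R sm p = colon R sm q"
      using Union_psi[OF p] Union_psi[OF q] by simp
    then show "p = q"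
      using inj_onD[OF inj _ p q] by simp
  qed
next
  assume inj: "inj_on (psi R z sm) (SpecM R pl sm)"
  show "inj_on (colon R sm) (SpecM R pl sm)"
  proof (rule inj_onI)
    fix p q assume p: "p \<in> SpecM R pl sm" and q: "q \<in> SpecM R pl sm"
      and "colon R sm p = colon R sm q"
    then have "psi R z sm p = psi R z sm q"
      by (simp add: psi_eq)
    then show "p = q"
      using inj_onD[OF inj _ p q] by simp
  qed
qed

lemma prime_ideal_map_onto_colon:
  assumes surj: "psi R z sm ` SpecM R pl sm = SpecR (R Quot Ann R z sm)"
  shows "prime_ideal_map_onto R (SpecM R pl sm) (colon R sm) (Ann R z sm)"
proof -
  have image: "colon R sm ` SpecM R pl sm = {P. primeideal P R \<and> Ann R z sm \<subseteq> P}"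
  proof (intro equalityI subsetI)
    fix P assume "P \<in> colon R sm ` SpecM R pl sm"
    then obtain p where p: "p \<in> SpecM R pl sm" "P = colon R sm p"
      by blast
    then have "Ann R z sm \<subseteq> P"
      by (simp add: Ann_subset_colon submodule_elem_if_SpecM)
    with p show "P \<in> {P. primeideal P R \<and> Ann R z sm \<subseteq> P}"
      using primeideal_colon by simp
  next
    fix P assume "P \<in> {P. primeideal P R \<and> Ann R z sm \<subseteq> P}"
    then have P: "primeideal P R" "Ann R z sm \<subseteq> P"
      by simp_all
    then have "(+>) (Ann R z sm) ` P \<in> psi R z sm ` SpecM R pl sm"
      unfolding surj SpecR_def by (simp add: primeideal_rcos_image[OF ideal_Ann])
    then obtain p where p: "p \<in> SpecM R pl sm" "(+>) (Ann R z sm) ` P = psi R z sm p"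
      by blast
    have "P = \<Union> ((+>) (Ann R z sm) ` P)"
      using Union_rcos_image[OF ideal_Ann primeideal.axioms(1)[OF P(1)] P(2)] by simp
    also have "\<dots> = colon R sm p"
      unfolding p(2) by (rule Union_psi[OF p(1)])
    finally show "P \<in> colon R sm ` SpecM R pl sm"
      using p(1) by blast
  qed
  show ?thesis
    by (intro prime_ideal_map_onto.intro prime_ideal_map.intro prime_ideal_map_axioms.intro
        prime_ideal_map_onto_axioms.intro is_cring primeideal_colon ideal_Ann image)
qed

end

theorem theorem7p1:
  fixes R :: "('r,'b) ring_scheme"
    and pl :: "'m::complete_lattice \<Rightarrow> 'm \<Rightarrow> 'm"
    and z :: 'm
    and sm :: "'r \<Rightarrow> 'm \<Rightarrow> 'm"
  assumes M: "le_module R pl z sm"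
    and surj: "psi R z sm ` SpecM R pl sm = SpecR (R Quot Ann R z sm)"
  shows "(spectral_space (zariskiM R pl sm) \<longleftrightarrow> t0_space (zariskiM R pl sm))
       \<and> (t0_space (zariskiM R pl sm) \<longleftrightarrow>
            (\<forall>p\<in>SpecM R pl sm. \<forall>q\<in>SpecM R pl sm.
               Vstar R pl sm p = Vstar R pl sm q \<longrightarrow> p = q))
       \<and> ((\<forall>p\<in>SpecM R pl sm. \<forall>q\<in>SpecM R pl sm.
               Vstar R pl sm p = Vstar R pl sm q \<longrightarrow> p = q) \<longleftrightarrow>
            (\<forall>P\<in>SpecR R. \<forall>p\<in>SpecP R pl sm P. \<forall>q\<in>SpecP R pl sm P. p = q))
       \<and> ((\<forall>P\<in>SpecR R. \<forall>p\<in>SpecP R pl sm P. \<forall>q\<in>SpecP R pl sm P. p = q) \<longleftrightarrow>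
            inj_on (psi R z sm) (SpecM R pl sm))
       \<and> (inj_on (psi R z sm) (SpecM R pl sm) \<longleftrightarrow>
            zariskiM R pl sm homeomorphic_space zariskiR (R Quot Ann R z sm))"
proof -
  interpret le_mod R pl z sm
    by (rule le_mod.intro[OF M])
  interpret prime_ideal_map_onto R "SpecM R pl sm" "colon R sm" "Ann R z sm"
    by (rule prime_ideal_map_onto_colon[OF surj])
  show ?thesis
    unfolding zariskiM_eq_zariski_on
      spectral_space_iff_t0_space t0_space_iff_inj homeomorphic_space_quotient_iff_inj
      inj_on_colon_iff_Vstar[symmetric] inj_on_colon_iff_SpecP[symmetric]
      inj_on_colon_iff_psi[symmetric]
    by simp
qed

end
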